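(* Let $\alpha$ be an involution of $Y$ which interchanges $E_1'\leftrightarrow R_3$, $E_2'\leftrightarrow R_1$, $E_3'\leftrightarrow R_2$ and permutes the six $A_2$-configurations $R_{i1}-R_{i2}$ in three orbits. Then the class of $\alpha(C_1')$ in $\mathrm{Pic}(Y)$ is either $C_1'$ or $-R_3-E_1'+3(E_3'+R_2)-C_1'$.
   Context: $Y$ is the minimal resolution of the quotient of the Cartwright–Steger surface $X$ by its automorphism group $\mathrm{Aut}(X)\cong\mathbb{Z}/3$; $Y$ is a simply connected minimal surface of general type with $K_Y^2=2$, $p_g=1$, $\mathrm{rk}\,\mathrm{Pic}(Y)=18$, so numerical and linear equivalence coincide on $Y$. $R_1,R_2,R_3$ are the three $(-3)$-curves of the resolution over the images of the fixed points of type $\frac13(1,1)$, $R_{j1}-R_{j2}$ ($j=1,\dots,6$) the $A_2$-chains of $(-2)$-curves over the images of the fixed points of type $\frac13(1,2)$, and $E_1',E_2',E_3',C_1',\dots,C_4'$ are the proper transforms of the images of certain totally geodesic curves. The $R_{lm}$ are disjoint from $E_i',R_j,C_k'$, and $\mathrm{Pic}(Y)\otimes\mathbb{Q}$ is spanned by $E_1',E_3',R_1,R_2,R_3,C_1'$ and the $R_{ij}$. The intersection matrix in the order $E_1',E_2',E_3',R_1,R_2,R_3,C_1'$ is $$\begin{pmatrix}-3&0&0&3&1&2&2\\0&-3&0&2&1&3&0\\0&0&-3&1&4&1&1\\3&2&1&-3&0&0&0\\1&1&4&0&-3&0&1\\2&3&1&0&0&-3&2\\2&0&1&0&1&2&-2\end{pmatrix}.$$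 $K_Y\equiv E_3'+R_2$ and $E_1'+E_2'+R_1+R_3\equiv 2E_3'+2R_2$. *)

theory Defs
  imports "HOL-Analysis.Analysis"
begin

text \<open>Intersection matrix of the curves E1', E2', E3', R1, R2, R3, C1' (in this order)
  on the surface Y, as given in the paper.\<close>
definition intersection_matrix :: "int list list" where
  "intersection_matrix =
    [[-3, 0, 0, 3, 1, 2, 2],
     [ 0,-3, 0, 2, 1, 3, 0],
     [ 0, 0,-3, 1, 4, 1, 1],
     [ 3, 2, 1,-3, 0, 0, 0],
     [ 1, 1, 4, 0,-3, 0, 1],
     [ 2, 3, 1, 0, 0,-3, 2],
     [ 2, 0, 1, 0, 1, 2,-2]]"

definition seven_classes :: "(nat \<Rightarrow> 'v) \<Rightarrow> (nat \<Rightarrow> 'v) \<Rightarrow> 'v \<Rightarrow> 'v list" where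
  "seven_classes E R C1 = [E 1, E 2, E 3, R 1, R 2, R 3, C1]"

end

theory Submission
  imports Defs
begin

text \<open>The class of \<open>\<alpha>(C\<^sub>1')\<close> is pinned down by its intersection numbers: since \<open>\<alpha>\<close> is an
  isometric involution it meets \<open>E\<^sub>1', E\<^sub>3', R\<^sub>1, R\<^sub>2, R\<^sub>3\<close> as \<open>C\<^sub>1'\<close> meets their images, it is
  orthogonal to the \<open>A\<^sub>2\<close>-curves, and the only unknown is \<open>t = \<alpha>(C\<^sub>1')\<cdot>C\<^sub>1'\<close>. Nondegeneracy of the
  intersection form then gives \<open>\<alpha>(C\<^sub>1')\<close> as an explicit class depending linearly on \<open>t\<close>, and
  \<open>\<alpha>(C\<^sub>1')\<^sup>2 = C\<^sub>1'\<^sup>2 = -2\<close> becomes the quadratic \<open>(t - 4)(t + 2) = 0\<close>; \<open>t = -2\<close> gives \<open>C\<^sub>1'\<close>,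
  \<open>t = 4\<close> the other class.\<close>

lemma isometric_involution_adjoint:
  assumes "\<And>x y. B (f x) (f y) = B x y" and "\<And>x. f (f x) = x"
  shows "B (f x) y = B x (f y)"
  by (metis assms)

lemma nondegenerate_eq_if_eq_on_spanning_set:
  fixes B :: "'v::real_vector \<Rightarrow> 'v \<Rightarrow> real"
  assumes "bilinear B"
    and nondeg: "\<And>x. (\<forall>y. B x y = 0) \<Longrightarrow> x = 0"
    and "span S = UNIV"
    and eq: "\<And>v. v \<in> S \<Longrightarrow> B x v = B y v"
  shows "x = y"
proof -
  have lin: "linear (B (x - y))"
    using \<open>bilinear B\<close> by (simp add: bilinear_def)
  have "B (x - y) v = 0" if "v \<in> S" for v
    using eq[OF that] bilinear_lsub[OF \<open>bilinear B\<close>] by simp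
  then have "B (x - y) v = 0" for v
    using linear_eq_0_on_span[OF lin] \<open>span S = UNIV\<close> by blast
  then show ?thesis
    using nondeg[of "x - y"] by simp
qed

locale Y_lattice =
  fixes B :: "'v::real_vector \<Rightarrow> 'v \<Rightarrow> real"
    and E R :: "nat \<Rightarrow> 'v"
    and Rc :: "nat \<Rightarrow> nat \<Rightarrow> 'v"
    and C1 :: 'v
  assumes bil: "bilinear B"
    and sym: "\<And>x y. B x y = B y x"
    and nondeg: "\<And>x. (\<forall>y. B x y = 0) \<Longrightarrow> x = 0"
    and spans: "span ({E 1, E 3, R 1, R 2, R 3, C1} \<union> {Rc i j | i j. i \<in> {1..6} \<and> j \<in> {1,2}}) = UNIV"
    and matrix: "\<And>i j. i < 7 \<Longrightarrow> j < 7 \<Longrightarrow>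
        B (seven_classes E R C1 ! i) (seven_classes E R C1 ! j) = of_int (intersection_matrix ! i ! j)"
    and A2_orth: "\<And>i j k. i \<in> {1..6} \<Longrightarrow> j \<in> {1,2} \<Longrightarrow> k \<in> {1,2,3} \<Longrightarrow>
        B (Rc i j) (E k) = 0 \<and> B (Rc i j) (R k) = 0"
    and A2_orth_C: "\<And>i j. i \<in> {1..6} \<Longrightarrow> j \<in> {1,2} \<Longrightarrow> B (Rc i j) C1 = 0"
begin

text \<open>Otherwise the simplifier turns \<open>E 1\<close> into \<open>E (Suc 0)\<close> and the Gram facts below stop matching.\<close>
declare One_nat_def [simp del]

lemmas bilinear_simps =
  bilinear_ladd[OF bil] bilinear_radd[OF bil] bilinear_lmul[OF bil] bilinear_rmul[OF bil]
  bilinear_lsub[OF bil] bilinear_rsub[OF bil] bilinear_lneg[OF bil] bilinear_rneg[OF bil]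

lemma gram:
  "B (E 1) (E 1) = -3" "B (E 1) (E 3) = 0" "B (E 1) (R 1) = 3" "B (E 1) (R 2) = 1"
  "B (E 1) (R 3) = 2" "B (E 1) C1 = 2"
  "B (E 3) (E 1) = 0" "B (E 3) (E 3) = -3" "B (E 3) (R 1) = 1" "B (E 3) (R 2) = 4"
  "B (E 3) (R 3) = 1" "B (E 3) C1 = 1"
  "B (R 2) (E 1) = 1" "B (R 2) (E 3) = 4" "B (R 2) (R 1) = 0" "B (R 2) (R 2) = -3"
  "B (R 2) (R 3) = 0" "B (R 2) C1 = 1"
  "B (R 3) (E 1) = 2" "B (R 3) (E 3) = 1" "B (R 3) (R 1) = 0" "B (R 3) (R 2) = 0"
  "B (R 3) (R 3) = -3" "B (R 3) C1 = 2"
  "B C1 (E 1) = 2" "B C1 (E 2) = 0" "B C1 (E 3) = 1" "B C1 (R 1) = 0" "B C1 (R 2) = 1"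
  "B C1 (R 3) = 2" "B C1 C1 = -2"
  using matrix[of 0 0] matrix[of 0 2] matrix[of 0 3] matrix[of 0 4] matrix[of 0 5] matrix[of 0 6]
    matrix[of 2 0] matrix[of 2 2] matrix[of 2 3] matrix[of 2 4] matrix[of 2 5] matrix[of 2 6]
    matrix[of 4 0] matrix[of 4 2] matrix[of 4 3] matrix[of 4 4] matrix[of 4 5] matrix[of 4 6]
    matrix[of 5 0] matrix[of 5 2] matrix[of 5 3] matrix[of 5 4] matrix[of 5 5] matrix[of 5 6]
    matrix[of 6 0] matrix[of 6 1] matrix[of 6 2] matrix[of 6 3] matrix[of 6 4] matrix[of 6 5]
    matrix[of 6 6]
  by (simp_all add: seven_classes_def intersection_matrix_def)

text \<open>The solution of the linear system expressing that a class meets \<open>E\<^sub>1', E\<^sub>3', R\<^sub>1, R\<^sub>2, R\<^sub>3, C\<^sub>1'\<close>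
  with multiplicities \<open>2, 1, 0, 1, 2, t\<close> and is orthogonal to the \<open>A\<^sub>2\<close>-curves.\<close>

definition candidate_class :: "real \<Rightarrow> 'v" where
  "candidate_class t = (-1/3 - t/6) *\<^sub>R (E 1 + R 3) + (1 + t/2) *\<^sub>R (E 3 + R 2) + (1/3 - t/3) *\<^sub>R C1"

lemma candidate_class_orth_A2:
  assumes "i \<in> {1..6}" "j \<in> {1,2}"
  shows "B (Rc i j) (candidate_class t) = 0"
  using A2_orth[OF assms, of 1] A2_orth[OF assms, of 2] A2_orth[OF assms, of 3] A2_orth_C[OF assms]
  by (simp add: candidate_class_def bilinear_simps)

lemma candidate_class_meets:
  "B (candidate_class t) v =
    (-1/3 - t/6) * (B (E 1) v + B (R 3) v) + (1 + t/2) * (B (E 3) v + B (R 2) v) + (1/3 - t/3) * B C1 v"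
  by (simp add: candidate_class_def bilinear_simps distrib_right)

lemma candidate_class_intersections:
  "B (candidate_class t) (E 1) = 2" "B (candidate_class t) (E 3) = 1"
  "B (candidate_class t) (R 1) = 0" "B (candidate_class t) (R 2) = 1"
  "B (candidate_class t) (R 3) = 2" "B (candidate_class t) C1 = t"
  by (simp_all add: candidate_class_meets gram field_simps)

lemma eq_candidate_class:
  assumes orth: "\<And>i j. i \<in> {1..6} \<Longrightarrow> j \<in> {1,2} \<Longrightarrow> B (Rc i j) x = 0"
    and "B x (E 1) = 2" "B x (E 3) = 1" "B x (R 1) = 0" "B x (R 2) = 1" "B x (R 3) = 2"
  shows "x = candidate_class (B x C1)"
proof (rule nondegenerate_eq_if_eq_on_spanning_set[OF bil nondeg spans])
  fix v assume v: "v \<in> {E 1, E 3, R 1, R 2, R 3, C1} \<union> {Rc i j | i j. i \<in> {1..6} \<and> j \<in> {1,2}}"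
  show "B x v = B (candidate_class (B x C1)) v"
  proof (cases "v \<in> {E 1, E 3, R 1, R 2, R 3, C1}")
    case True
    then show ?thesis
      using assms(2-6) by (auto simp: candidate_class_intersections)
  next
    case False
    then obtain i j where ij: "i \<in> {1..6}" "j \<in> {1,2}" and "v = Rc i j"
      using v by blast
    then show ?thesis
      using orth[OF ij] candidate_class_orth_A2[OF ij] sym[of _ "Rc i j"] by simp
  qed
qed

lemma candidate_class_square:
  "B (candidate_class t) (candidate_class t) = (2 + 2 * t - t\<^sup>2) / 3"
proof -
  let ?c = "candidate_class t"
  have "B ?c ?c = (-1/3 - t/6) * (B ?c (E 1) + B ?c (R 3)) + (1 + t/2) * (B ?c (E 3) + B ?c (R 2))
      + (1/3 - t/3) * B ?c C1"
    by (subst (2) candidate_class_def) (simp add: bilinear_simps distrib_left)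
  then show ?thesis
    by (simp add: candidate_class_intersections power2_eq_square field_simps)
qed

lemma candidate_class_minus_2: "candidate_class (-2) = C1"
  by (simp add: candidate_class_def)

lemma candidate_class_4: "candidate_class 4 = - R 3 - E 1 + 3 *\<^sub>R (E 3 + R 2) - C1"
  by (simp add: candidate_class_def algebra_simps)

end

theorem lemma5p2:
  fixes B :: "'v::real_vector \<Rightarrow> 'v \<Rightarrow> real"
    and E R :: "nat \<Rightarrow> 'v"
    and Rc :: "nat \<Rightarrow> nat \<Rightarrow> 'v"
    and C1 :: 'v
    and K :: 'v
    and \<alpha> :: "'v \<Rightarrow> 'v"
  assumes bil: "bilinear B"
    and sym: "\<And>x y. B x y = B y x"
    and nondeg: "\<And>x. (\<forall>y. B x y = 0) \<Longrightarrow> x = 0"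
    and rank: "dim (UNIV :: 'v set) = 18"
    and spans: "span ({E 1, E 3, R 1, R 2, R 3, C1} \<union> {Rc i j | i j. i \<in> {1..6} \<and> j \<in> {1,2}}) = UNIV"
    and matrix: "\<And>i j. i < 7 \<Longrightarrow> j < 7 \<Longrightarrow>
        B (seven_classes E R C1 ! i) (seven_classes E R C1 ! j) = of_int (intersection_matrix ! i ! j)"
    and A2_self: "\<And>i j. i \<in> {1..6} \<Longrightarrow> j \<in> {1,2} \<Longrightarrow> B (Rc i j) (Rc i j) = -2"
    and A2_chain: "\<And>i. i \<in> {1..6} \<Longrightarrow> B (Rc i 1) (Rc i 2) = 1"
    and A2_disj: "\<And>i j l m. i \<in> {1..6} \<Longrightarrow> l \<in> {1..6} \<Longrightarrow> j \<in> {1,2} \<Longrightarrow> m \<in> {1,2} \<Longrightarrow>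
        i \<noteq> l \<Longrightarrow> B (Rc i j) (Rc l m) = 0"
    and A2_orth: "\<And>i j k. i \<in> {1..6} \<Longrightarrow> j \<in> {1,2} \<Longrightarrow> k \<in> {1,2,3} \<Longrightarrow>
        B (Rc i j) (E k) = 0 \<and> B (Rc i j) (R k) = 0"
    and A2_orth_C: "\<And>i j. i \<in> {1..6} \<Longrightarrow> j \<in> {1,2} \<Longrightarrow> B (Rc i j) C1 = 0"
    and canonical: "K = E 3 + R 2"
    and relation: "E 1 + E 2 + R 1 + R 3 = 2 *\<^sub>R (E 3 + R 2)"
    and \<alpha>_lin: "linear \<alpha>"
    and \<alpha>_isom: "\<And>x y. B (\<alpha> x) (\<alpha> y) = B x y"
    and \<alpha>_invol: "\<And>x. \<alpha> (\<alpha> x) = x"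
    and \<alpha>_E1: "\<alpha> (E 1) = R 3" and \<alpha>_R3: "\<alpha> (R 3) = E 1"
    and \<alpha>_E2: "\<alpha> (E 2) = R 1" and \<alpha>_R1: "\<alpha> (R 1) = E 2"
    and \<alpha>_E3: "\<alpha> (E 3) = R 2" and \<alpha>_R2: "\<alpha> (R 2) = E 3"
    and \<alpha>_A2: "\<exists>\<sigma>. \<sigma> permutes {1..6::nat} \<and>
        (\<forall>i\<in>{1..6}. \<sigma> (\<sigma> i) = i \<and> \<sigma> i \<noteq> i \<and>
          ((\<alpha> (Rc i 1) = Rc (\<sigma> i) 1 \<and> \<alpha> (Rc i 2) = Rc (\<sigma> i) 2) \<or>
           (\<alpha> (Rc i 1) = Rc (\<sigma> i) 2 \<and> \<alpha> (Rc i 2) = Rc (\<sigma> i) 1)))"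
  shows "\<alpha> C1 = C1 \<or> \<alpha> C1 = - R 3 - E 1 + 3 *\<^sub>R (E 3 + R 2) - C1"
proof -
  interpret Y_lattice B E R Rc C1
    by (unfold_locales; fact bil sym nondeg spans matrix A2_orth A2_orth_C)
  have adj: "B (\<alpha> x) y = B x (\<alpha> y)" for x y
    using isometric_involution_adjoint[of B \<alpha>] \<alpha>_isom \<alpha>_invol by blast
  obtain \<sigma> where "\<sigma> permutes {1..6}" and \<sigma>:
    "\<forall>i\<in>{1..6}. \<alpha> (Rc i 1) = Rc (\<sigma> i) 1 \<and> \<alpha> (Rc i 2) = Rc (\<sigma> i) 2 \<or>
                \<alpha> (Rc i 1) = Rc (\<sigma> i) 2 \<and> \<alpha> (Rc i 2) = Rc (\<sigma> i) 1"
    using \<alpha>_A2 by blast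
  have orth: "B (Rc i j) (\<alpha> C1) = 0" if "i \<in> {1..6}" "j \<in> {1,2}" for i j
  proof -
    have "\<sigma> i \<in> {1..6}"
      using permutes_in_image[OF \<open>\<sigma> permutes {1..6}\<close>] that(1) by blast
    moreover have "\<alpha> (Rc i j) \<in> {Rc (\<sigma> i) 1, Rc (\<sigma> i) 2}"
      using \<sigma> that by auto
    ultimately show ?thesis
      using adj[of "Rc i j" C1] A2_orth_C sym by fastforce
  qed
  define t where "t = B (\<alpha> C1) C1"
  have "B (\<alpha> C1) (E 1) = B C1 (R 3)" "B (\<alpha> C1) (E 3) = B C1 (R 2)"
    "B (\<alpha> C1) (R 1) = B C1 (E 2)" "B (\<alpha> C1) (R 2) = B C1 (E 3)"
    "B (\<alpha> C1) (R 3) = B C1 (E 1)"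
    by (simp_all only: adj \<alpha>_E1 \<alpha>_E3 \<alpha>_R1 \<alpha>_R2 \<alpha>_R3)
  then have "\<alpha> C1 = candidate_class t"
    unfolding t_def by (intro eq_candidate_class orth) (simp_all add: gram)
  moreover have "B (\<alpha> C1) (\<alpha> C1) = -2"
    by (simp add: \<alpha>_isom gram)
  ultimately have "(t - 4) * (t + 2) = 0"
    by (simp add: candidate_class_square power2_eq_square algebra_simps)
  then have "t = -2 \<or> t = 4"
    by auto
  then show ?thesis
    using \<open>\<alpha> C1 = candidate_class t\<close> candidate_class_minus_2 candidate_class_4 by auto
qed

end
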